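(* For every $n\geq 4$, $c_0(W_n)=2$.
   Context: The wheel $W_n$ ($n\geq 4$) is the cycle $C_{n-1}$ together with one additional vertex adjacent to all cycle vertices. Graphs are reflexive (a player may stay in place). The 0-visibility game: $k$ cops and one robber; cops choose starting vertices, then the robber; in each round all cops move (each to an adjacent vertex or staying), then the robber moves. The cops never see the robber (the game ends when a cop occupies the robber's vertex), while the robber sees everything and knows the cops' strategy in advance; hence a cop strategy is a fixed sequence of positions of the cops, consecutive positions of each cop being equal or adjacent, and it is winning if every robber walk is caught after finitely many rounds. The 0-visibility cop number $c_0(G)$ is the least $k$ for which $k$ cops have a winning strategy. *)

theory Defs
  imports Main
begin

definition step :: "'v set \<Rightarrow> ('v \<Rightarrow> 'v \<Rightarrow> bool) \<Rightarrow> 'v \<Rightarrow> 'v \<Rightarrow> bool" where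
  "step V E u v \<longleftrightarrow> v \<in> V \<and> (u = v \<or> E u v)"

text \<open>A strategy for k cops: positions cops t i of cop i (i < k) at round t
  (round 0 = starting positions).\<close>
definition cop_strategy :: "'v set \<Rightarrow> ('v \<Rightarrow> 'v \<Rightarrow> bool) \<Rightarrow> nat \<Rightarrow> (nat \<Rightarrow> nat \<Rightarrow> 'v) \<Rightarrow> bool" where
  "cop_strategy V E k cops \<longleftrightarrow>
     (\<forall>i<k. cops 0 i \<in> V) \<and> (\<forall>t. \<forall>i<k. step V E (cops t i) (cops (Suc t) i))"

text \<open>A robber walk: r t is the robber's position after his move in round t
  (r 0 = starting position).\<close>
definition robber_walk :: "'v set \<Rightarrow> ('v \<Rightarrow> 'v \<Rightarrow> bool) \<Rightarrow> (nat \<Rightarrow> 'v) \<Rightarrow> bool" where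
  "robber_walk V E r \<longleftrightarrow> r 0 \<in> V \<and> (\<forall>t. step V E (r t) (r (Suc t)))"

text \<open>The robber is caught if at some moment a cop occupies his vertex: either after the
  robber's move in round t (cops at cops t), or after the cops' move in round t+1
  (robber still at r t).\<close>
definition caught :: "nat \<Rightarrow> (nat \<Rightarrow> nat \<Rightarrow> 'v) \<Rightarrow> (nat \<Rightarrow> 'v) \<Rightarrow> bool" where
  "caught k cops r \<longleftrightarrow> (\<exists>t. \<exists>i<k. cops t i = r t \<or> cops (Suc t) i = r t)"

definition winning :: "'v set \<Rightarrow> ('v \<Rightarrow> 'v \<Rightarrow> bool) \<Rightarrow> nat \<Rightarrow> (nat \<Rightarrow> nat \<Rightarrow> 'v) \<Rightarrow> bool" where
  "winning V E k cops \<longleftrightarrow> cop_strategy V E k cops \<and>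
     (\<forall>r. robber_walk V E r \<longrightarrow> caught k cops r)"

definition zero_vis_cop_number :: "'v set \<Rightarrow> ('v \<Rightarrow> 'v \<Rightarrow> bool) \<Rightarrow> nat" where
  "zero_vis_cop_number V E = (LEAST k. \<exists>cops. winning V E k cops)"

text \<open>The wheel W_n: hub 0, cycle vertices 1, ..., n-1 (cycle C_{n-1} in this order).\<close>
definition wheel_V :: "nat \<Rightarrow> nat set" where
  "wheel_V n = {0..<n}"

definition wheel_E :: "nat \<Rightarrow> nat \<Rightarrow> nat \<Rightarrow> bool" where
  "wheel_E n u v \<longleftrightarrow> u \<in> wheel_V n \<and> v \<in> wheel_V n \<and> u \<noteq> v \<and>
     ((u = 0 \<or> v = 0) \<or> u = Suc v \<or> v = Suc u \<or>
      (u = 1 \<and> v = n - 1) \<or> (v = 1 \<and> u = n - 1))"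

end

theory Submission
  imports Defs
begin

text \<open>One cop never wins on a graph in which every closed neighbourhood has at least three
  vertices: knowing the cop's next two positions, the robber always has a move avoiding both.
  Two cops win on the wheel: one alternates between the hub and vertex 1, which confines the
  robber to the path 2, ..., n-1, while the other sweeps this path from n-1 downwards; the
  robber can gain at most one step per round on the sweeping cop and is caught within n rounds.\<close>

lemma card_ge_3_avoid:
  assumes "3 \<le> card A"
  obtains w where "w \<in> A" "w \<noteq> a" "w \<noteq> b"
proof -
  have "\<not> A \<subseteq> {a, b}"
  proof
    assume "A \<subseteq> {a, b}"
    then have "card A \<le> card {a, b}" by (simp add: card_mono)
    also have "\<dots> \<le> 2" by (simp add: card_insert_le_m1)
    finally show False using assms by simp
  qed
  then show thesis using that by blast
qed

lemma evasion_walk_exists: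
  assumes "V \<noteq> {}"
    and dodge: "\<And>v a b. v \<in> V \<Longrightarrow> \<exists>w. step V E v w \<and> w \<noteq> a \<and> w \<noteq> b"
  obtains r where "robber_walk V E r" "\<And>t. r t \<noteq> c t \<and> r t \<noteq> c (Suc t)"
proof -
  define r where "r = rec_nat (SOME w. w \<in> V \<and> w \<noteq> c 0 \<and> w \<noteq> c 1)
    (\<lambda>t v. SOME w. step V E v w \<and> w \<noteq> c (Suc t) \<and> w \<noteq> c (Suc (Suc t)))"
  have r_0: "r 0 \<in> V \<and> r 0 \<noteq> c 0 \<and> r 0 \<noteq> c 1"
  proof -
    obtain v where "v \<in> V" using assms(1) by blast
    then have "\<exists>w. w \<in> V \<and> w \<noteq> c 0 \<and> w \<noteq> c 1"
      using dodge[of v "c 0" "c 1"] by (auto simp: step_def)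
    from someI_ex[OF this] show ?thesis by (simp add: r_def)
  qed
  have r_Suc: "step V E (r t) (r (Suc t)) \<and> r (Suc t) \<noteq> c (Suc t)
      \<and> r (Suc t) \<noteq> c (Suc (Suc t))" if "r t \<in> V" for t
  proof -
    have "r (Suc t) = (SOME w. step V E (r t) w \<and> w \<noteq> c (Suc t) \<and> w \<noteq> c (Suc (Suc t)))"
      by (simp add: r_def)
    with someI_ex[OF dodge[OF that]] show ?thesis by simp
  qed
  have inv: "r t \<in> V \<and> r t \<noteq> c t \<and> r t \<noteq> c (Suc t)" for t
  proof (induction t)
    case 0
    show ?case using r_0 by simp
  next
    case (Suc t)
    then show ?case using r_Suc[of t] by (simp add: step_def)
  qed
  show thesis
    using that[of r] inv r_Suc by (simp add: robber_walk_def)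
qed

lemma not_winning_one_cop:
  assumes "V \<noteq> {}" "\<And>v. v \<in> V \<Longrightarrow> 3 \<le> card {w. step V E v w}" "k \<le> 1"
  shows "\<not> winning V E k cops"
proof
  assume win: "winning V E k cops"
  have "\<exists>w. step V E v w \<and> w \<noteq> a \<and> w \<noteq> b" if "v \<in> V" for v a b
    using card_ge_3_avoid[OF assms(2)[OF that]] by blast
  then obtain r where walk: "robber_walk V E r"
    and evades: "\<And>t. r t \<noteq> cops t 0 \<and> r t \<noteq> cops (Suc t) 0"
    using evasion_walk_exists[OF assms(1), of E "\<lambda>t. cops t 0"] by blast
  have "caught k cops r" using win walk by (simp add: winning_def)
  then obtain t i where "i < k" "cops t i = r t \<or> cops (Suc t) i = r t"
    by (auto simp: caught_def)
  moreover from \<open>i < k\<close> assms(3) have "i = 0" by simp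
  ultimately show False using evades by metis
qed

lemma wheel_closed_nbhd_card:
  assumes "n \<ge> 4" "v < n"
  shows "3 \<le> card {w. step (wheel_V n) (wheel_E n) v w}"
proof -
  define u where "u = (if Suc v < n then Suc v else 1)"
  define S where "S = (if v = 0 then {0, 1, 2} else {0, v, u})"
  have "3 = card S"
    using assms by (auto simp: S_def u_def)
  also have "\<dots> \<le> card {w. step (wheel_V n) (wheel_E n) v w}"
  proof (rule card_mono)
    show "finite {w. step (wheel_V n) (wheel_E n) v w}"
      by (rule finite_subset[of _ "wheel_V n"]) (auto simp: step_def wheel_V_def)
    show "S \<subseteq> {w. step (wheel_V n) (wheel_E n) v w}"
      using assms by (auto simp: S_def u_def step_def wheel_E_def wheel_V_def)
  qed
  finally show ?thesis .
qed

definition wheel_sweep :: "nat \<Rightarrow> nat \<Rightarrow> nat \<Rightarrow> nat" where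
  "wheel_sweep n t i = (if i = 0 then (if even t then 0 else 1) else n - 1 - t)"

lemma wheel_sweep_strategy:
  assumes "n \<ge> 4"
  shows "cop_strategy (wheel_V n) (wheel_E n) 2 (wheel_sweep n)"
proof -
  have "step (wheel_V n) (wheel_E n) (wheel_sweep n t i) (wheel_sweep n (Suc t) i)"
    if "i < 2" for t i
    using assms that
    by (cases "i = 0"; cases "n - 1 - t = 0")
      (auto simp: wheel_sweep_def step_def wheel_E_def wheel_V_def)
  then show ?thesis
    using assms by (auto simp: cop_strategy_def wheel_sweep_def wheel_V_def)
qed

lemma wheel_step_along_path:
  assumes "step (wheel_V n) (wheel_E n) v w" "2 \<le> v" "2 \<le> w"
  shows "w \<le> Suc v"
  using assms by (auto simp: step_def wheel_E_def)

lemma wheel_sweep_bounds_robber: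
  assumes "robber_walk (wheel_V n) (wheel_E n) r" "\<not> caught 2 (wheel_sweep n) r"
  shows "r t + t + 3 \<le> n"
proof -
  have evades: "r t \<noteq> wheel_sweep n t i \<and> r t \<noteq> wheel_sweep n (Suc t) i"
    if "i < 2" for t i
    using assms(2) that unfolding caught_def by metis
  have off_hub: "r t \<noteq> 0 \<and> r t \<noteq> 1" for t
    using evades[of 0 t] by (cases "even t") (auto simp: wheel_sweep_def)
  have ahead_of_sweeper: "r t \<noteq> n - 1 - t \<and> r t \<noteq> n - 1 - Suc t" for t
    using evades[of 1 t] by (simp add: wheel_sweep_def)
  show ?thesis
  proof (induction t)
    case 0
    have "r 0 < n" using assms(1) by (simp add: robber_walk_def wheel_V_def)
    then show ?case using off_hub[of 0] ahead_of_sweeper[of 0] by auto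
  next
    case (Suc t)
    have "r (Suc t) \<le> Suc (r t)"
      using assms(1) off_hub[of t] off_hub[of "Suc t"]
      by (intro wheel_step_along_path) (auto simp: robber_walk_def)
    then show ?case using Suc off_hub[of "Suc t"] ahead_of_sweeper[of "Suc t"] by auto
  qed
qed

lemma wheel_sweep_winning:
  assumes "n \<ge> 4"
  shows "winning (wheel_V n) (wheel_E n) 2 (wheel_sweep n)"
  using wheel_sweep_strategy[OF assms] wheel_sweep_bounds_robber[of n _ n]
  by (auto simp: winning_def)

theorem mainTheorem19:
  fixes n :: nat
  assumes "n \<ge> 4"
  shows "zero_vis_cop_number (wheel_V n) (wheel_E n) = 2"
  unfolding zero_vis_cop_number_def
proof (rule Least_equality)
  show "\<exists>cops. winning (wheel_V n) (wheel_E n) 2 cops"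
    using wheel_sweep_winning[OF assms] by blast
next
  fix k assume "\<exists>cops. winning (wheel_V n) (wheel_E n) k cops"
  moreover have "\<not> winning (wheel_V n) (wheel_E n) k cops" if "k \<le> 1" for cops
    using assms that wheel_closed_nbhd_card[OF assms]
    by (intro not_winning_one_cop) (auto simp: wheel_V_def)
  ultimately show "2 \<le> k" by force
qed

end
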